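(* Let $C$ be a copula on $[0,1]^d$ such that $C(\mathbf{u})=1-\|\mathbf{1}-\mathbf{u}\|_D+o(\|\mathbf{1}-\mathbf{u}\|_D)$ as $\mathbf{u}\uparrow\mathbf{1}$, where $\|\cdot\|_D$ is a $D$-norm on $\mathbb{R}^d$. Let $\|\cdot\|_C$ be the $F$-norm on $\mathbb{R}^{d+1}$ corresponding to $C$. Then $$1-\|(x,1,\dots,1)\|_C=(1-x)-\frac{(1-x)^2}{2}\|\mathbf{1}\|_D+o((1-x)^2)\quad\text{as }x\uparrow1.$$
   Context: A copula on $[0,1]^d$ is a distribution function on $\mathbb{R}^d$ with standard uniform margins. If $\mathbf{U}=(U_1,\dots,U_d)$ has distribution function $C$, its $F$-norm is $\|\mathbf{x}\|_C=E(\max(|x_0|,|x_1|U_1,\dots,|x_d|U_d))$, $\mathbf{x}\in\mathbb{R}^{d+1}$. A $D$-norm on $\mathbb{R}^d$ is a norm $\|\mathbf{x}\|_D=E(\max(|x_1|Z_1,\dots,|x_d|Z_d))$ with $\mathbf{Z}$ componentwise nonnegative and $E(Z_i)=1$. $\mathbf{1}=(1,\dots,1)\in\mathbb{R}^d$; $\mathbf{u}\uparrow\mathbf{1}$ is componentwise. *)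

theory Defs
  imports "HOL-Probability.Probability" "HOL-Library.Landau_Symbols"
begin

definition copula_rv :: "'a measure \<Rightarrow> ('a \<Rightarrow> real^'d::finite) \<Rightarrow> bool" where
  "copula_rv M U \<longleftrightarrow> prob_space M \<and> U \<in> borel_measurable M \<and>
     (\<forall>i. \<forall>t\<in>{0..1}. measure M {\<omega>\<in>space M. U \<omega> $ i \<le> t} = t)"

definition copula_cdf :: "'a measure \<Rightarrow> ('a \<Rightarrow> real^'d::finite) \<Rightarrow> real^'d \<Rightarrow> real" where
  "copula_cdf M U u = measure M {\<omega>\<in>space M. \<forall>i. U \<omega> $ i \<le> u $ i}"

text \<open>F-norm on R^(d+1), written with the 0-th coordinate x0 separated:
  ||(x0,x)||_C = E(max(|x0|, |x_1| U_1, ..., |x_d| U_d)).\<close>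
definition F_norm :: "'a measure \<Rightarrow> ('a \<Rightarrow> real^'d::finite) \<Rightarrow> real \<Rightarrow> real^'d \<Rightarrow> real" where
  "F_norm M U x0 x = integral\<^sup>L M (\<lambda>\<omega>. max \<bar>x0\<bar> (Max (range (\<lambda>i. \<bar>x $ i\<bar> * U \<omega> $ i))))"

definition D_norm_generator :: "'b measure \<Rightarrow> ('b \<Rightarrow> real^'d::finite) \<Rightarrow> bool" where
  "D_norm_generator N Z \<longleftrightarrow> prob_space N \<and> Z \<in> borel_measurable N \<and>
     (\<forall>i. (AE \<omega> in N. Z \<omega> $ i \<ge> 0) \<and> integrable N (\<lambda>\<omega>. Z \<omega> $ i) \<and>
          integral\<^sup>L N (\<lambda>\<omega>. Z \<omega> $ i) = 1)"

definition D_norm :: "'b measure \<Rightarrow> ('b \<Rightarrow> real^'d::finite) \<Rightarrow> real^'d \<Rightarrow> real" where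
  "D_norm N Z x = integral\<^sup>L N (\<lambda>\<omega>. Max (range (\<lambda>i. \<bar>x $ i\<bar> * Z \<omega> $ i)))"

end

theory Submission
  imports Defs
begin

text \<open>Put \<open>Y = max\<^sub>i U\<^sub>i\<close>. For \<open>x \<ge> 0\<close> the F-norm \<open>\<parallel>(x,1,\<dots>,1)\<parallel>\<^sub>C = E max(x, Y)\<close> equals
  \<open>x + \<integral>\<^sub>x\<^sup>1 P(Y > t) dt\<close>, and \<open>P(Y > t) = 1 - C(t,\<dots>,t)\<close>. By homogeneity of the D-norm the
  hypothesis on the diagonal says \<open>1 - C(t,\<dots>,t) = (1 - t)\<parallel>\<one>\<parallel>\<^sub>D + o(1 - t)\<close> as \<open>t \<uparrow> 1\<close>,
  and integrating this from \<open>x\<close> to \<open>1\<close> yields the quadratic term.\<close>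

lemma D_norm_scaleR:
  "D_norm N Z (c *\<^sub>R x) = \<bar>c\<bar> * D_norm N Z x"
proof -
  have "Max (range (\<lambda>i. \<bar>(c *\<^sub>R x) $ i\<bar> * Z \<omega> $ i))
      = \<bar>c\<bar> * Max (range (\<lambda>i. \<bar>x $ i\<bar> * Z \<omega> $ i))" for \<omega>
  proof -
    have "mono ((*) \<bar>c\<bar>)"
      by (simp add: mono_def mult_left_mono)
    then have "\<bar>c\<bar> * Max (range (\<lambda>i. \<bar>x $ i\<bar> * Z \<omega> $ i))
        = Max ((*) \<bar>c\<bar> ` range (\<lambda>i. \<bar>x $ i\<bar> * Z \<omega> $ i))"
      by (rule mono_Max_commute) auto
    then show ?thesis
      by (simp add: image_image abs_mult mult.assoc)
  qed
  then show ?thesis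
    unfolding D_norm_def by simp
qed

lemma filterlim_vec_at_left_one:
  "filterlim (\<lambda>t. vec t :: real^'d::finite) (at 1 within cbox 0 1) (at_left 1)"
  unfolding filterlim_at
proof
  show "\<forall>\<^sub>F t in at_left 1. (vec t :: real^'d) \<in> cbox 0 1 \<and> vec t \<noteq> (1::real^'d)"
    using eventually_at_left_real[of 0 "1::real", simplified]
    by eventually_elim (auto simp: mem_box_cart vec_eq_iff)
  show "((\<lambda>t. vec t :: real^'d) \<longlongrightarrow> 1) (at_left 1)"
    by (rule vec_tendstoI) (auto intro!: tendsto_eq_intros)
qed

lemma (in sigma_finite_measure) nn_integral_excess_eq_tail_integral:
  fixes Y :: "'a \<Rightarrow> real"
  assumes [measurable]: "Y \<in> borel_measurable M"
  shows "(\<integral>\<^sup>+\<omega>. ennreal (Y \<omega> - x) \<partial>M)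
       = (\<integral>\<^sup>+t\<in>{x..}. emeasure M {\<omega>\<in>space M. t < Y \<omega>} \<partial>lborel)"
proof -
  have "ennreal (Y \<omega> - x) = (\<integral>\<^sup>+t. indicator {t. x \<le> t \<and> t < Y \<omega>} t \<partial>lborel)" for \<omega>
  proof (cases "x \<le> Y \<omega>")
    case True
    have "{t. x \<le> t \<and> t < Y \<omega>} = {x..<Y \<omega>}"
      by auto
    then show ?thesis
      using True by (simp add: emeasure_lborel_Ico)
  qed (simp add: ennreal_neg)
  then have "(\<integral>\<^sup>+\<omega>. ennreal (Y \<omega> - x) \<partial>M)
      = (\<integral>\<^sup>+\<omega>. (\<integral>\<^sup>+t. indicator {t. x \<le> t \<and> t < Y \<omega>} t \<partial>lborel) \<partial>M)"
    by simp
  also have "\<dots> = (\<integral>\<^sup>+t. (\<integral>\<^sup>+\<omega>. indicator {t. x \<le> t \<and> t < Y \<omega>} t \<partial>M) \<partial>lborel)"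
  proof (rule pair_sigma_finite.Fubini'[symmetric])
    show "pair_sigma_finite M lborel"
      by (simp add: pair_sigma_finite_def sigma_finite_measure_axioms lborel.sigma_finite_measure_axioms)
    have "(\<lambda>p. indicator {p\<in>space (M \<Otimes>\<^sub>M lborel). x \<le> snd p \<and> snd p < Y (fst p)} p :: ennreal)
        \<in> borel_measurable (M \<Otimes>\<^sub>M lborel)"
      by measurable
    then show "(\<lambda>(\<omega>, t). indicator {t. x \<le> t \<and> t < Y \<omega>} t :: ennreal) \<in> borel_measurable (M \<Otimes>\<^sub>M lborel)"
      by (rule measurable_cong[THEN iffD1, rotated]) (auto simp: indicator_def space_pair_measure)
  qed
  also have "\<dots> = (\<integral>\<^sup>+t\<in>{x..}. emeasure M {\<omega>\<in>space M. t < Y \<omega>} \<partial>lborel)"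
  proof (rule nn_integral_cong)
    fix t :: real
    have "(\<integral>\<^sup>+\<omega>. indicator {t. x \<le> t \<and> t < Y \<omega>} t \<partial>M)
        = (\<integral>\<^sup>+\<omega>. indicator {x..} t * indicator {\<omega>\<in>space M. t < Y \<omega>} \<omega> \<partial>M)"
      by (rule nn_integral_cong) (auto simp: indicator_def)
    also have "\<dots> = emeasure M {\<omega>\<in>space M. t < Y \<omega>} * indicator {x..} t"
      by (subst nn_integral_cmult_indicator) (auto simp: mult.commute)
    finally show "(\<integral>\<^sup>+\<omega>. indicator {t. x \<le> t \<and> t < Y \<omega>} t \<partial>M)
        = emeasure M {\<omega>\<in>space M. t < Y \<omega>} * indicator {x..} t" .
  qed
  finally show ?thesis .
qed

lemma (in prob_space) expectation_max_const_eq_tail: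
  fixes Y :: "'a \<Rightarrow> real"
  assumes "integrable M Y"
  shows "(\<integral>\<omega>. max x (Y \<omega>) \<partial>M)
       = x + enn2real (\<integral>\<^sup>+t\<in>{x..}. ennreal (prob {\<omega>\<in>space M. t < Y \<omega>}) \<partial>lborel)"
proof -
  have excess_integrable: "integrable M (\<lambda>\<omega>. max x (Y \<omega>) - x)"
    using assms by auto
  have "ennreal (\<integral>\<omega>. max x (Y \<omega>) - x \<partial>M) = (\<integral>\<^sup>+\<omega>. ennreal (max x (Y \<omega>) - x) \<partial>M)"
    by (rule nn_integral_eq_integral[symmetric]) (use excess_integrable in auto)
  also have "\<dots> = (\<integral>\<^sup>+\<omega>. ennreal (Y \<omega> - x) \<partial>M)"
    by (intro nn_integral_cong) (auto simp: max_def ennreal_neg)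
  also have "\<dots> = (\<integral>\<^sup>+t\<in>{x..}. ennreal (prob {\<omega>\<in>space M. t < Y \<omega>}) \<partial>lborel)"
    using assms by (simp add: nn_integral_excess_eq_tail_integral emeasure_eq_measure)
  finally have excess_eq: "ennreal (\<integral>\<omega>. max x (Y \<omega>) - x \<partial>M)
      = (\<integral>\<^sup>+t\<in>{x..}. ennreal (prob {\<omega>\<in>space M. t < Y \<omega>}) \<partial>lborel)" .
  have "0 \<le> (\<integral>\<omega>. max x (Y \<omega>) - x \<partial>M)"
    by (intro integral_nonneg_AE) simp
  then have "(\<integral>\<omega>. max x (Y \<omega>) - x \<partial>M)
      = enn2real (\<integral>\<^sup>+t\<in>{x..}. ennreal (prob {\<omega>\<in>space M. t < Y \<omega>}) \<partial>lborel)"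
    by (simp flip: excess_eq)
  then show ?thesis
    using excess_integrable assms by (simp add: prob_space)
qed

lemma copula_rv_AE_in_unit_interval:
  assumes "copula_rv M U"
  shows "AE \<omega> in M. U \<omega> $ i \<in> {0..1}"
proof -
  interpret prob_space M
    using assms unfolding copula_rv_def by simp
  have [measurable]: "U \<in> borel_measurable M"
    using assms unfolding copula_rv_def by simp
  have "prob {\<omega>\<in>space M. U \<omega> $ i \<le> 1} = 1" "prob {\<omega>\<in>space M. U \<omega> $ i \<le> 0} = 0"
    using assms unfolding copula_rv_def by auto
  then have "AE \<omega> in M. U \<omega> $ i \<le> 1" "AE \<omega> in M. \<not> U \<omega> $ i \<le> 0"
    by (simp_all add: prob_Collect_eq_1 prob_Collect_eq_0)
  then show ?thesis
    by eventually_elim auto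
qed

lemma F_norm_diagonal_eq_tail:
  assumes "copula_rv M U" "0 \<le> x"
  shows "F_norm M U x 1 = x + enn2real (\<integral>\<^sup>+t\<in>{x..<1}. ennreal (1 - copula_cdf M U (vec t)) \<partial>lborel)"
proof -
  interpret prob_space M
    using assms unfolding copula_rv_def by simp
  have U_measurable: "U \<in> borel_measurable M"
    using assms unfolding copula_rv_def by simp
  have [measurable]: "(\<lambda>\<omega>. U \<omega> $ i) \<in> borel_measurable M" for i
    using measurable_compose[OF U_measurable borel_measurable_nth] by simp
  define Y where "Y \<omega> = Max (range (\<lambda>i. U \<omega> $ i))" for \<omega>
  have Y_le_iff: "Y \<omega> \<le> t \<longleftrightarrow> (\<forall>i. U \<omega> $ i \<le> t)" for \<omega> t
    unfolding Y_def by (subst Max_le_iff) auto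
  have [measurable]: "Y \<in> borel_measurable M"
    unfolding Y_def using borel_measurable_Max[of UNIV "\<lambda>i \<omega>. U \<omega> $ i" M] by simp
  have "AE \<omega> in M. \<forall>i. U \<omega> $ i \<in> {0..1}"
    using copula_rv_AE_in_unit_interval[OF assms(1)] by (simp add: AE_all_countable)
  then have Y_unit: "AE \<omega> in M. Y \<omega> \<in> {0..1}"
  proof eventually_elim
    case (elim \<omega>)
    obtain i :: 'b where True by simp
    have "U \<omega> $ i \<le> Y \<omega>"
      unfolding Y_def by (rule Max_ge) auto
    with elim show ?case
      using Y_le_iff[of \<omega> 1] by (auto intro: order_trans[of 0 "U \<omega> $ i"])
  qed
  have "integrable M Y"
    by (rule integrable_const_bound[where B=1]) (use Y_unit in auto)
  have tail_eq: "ennreal (prob {\<omega>\<in>space M. t < Y \<omega>}) * indicator {x..} t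
      = ennreal (1 - copula_cdf M U (vec t)) * indicator {x..<1} t" for t
  proof -
    have "{\<omega>\<in>space M. Y \<omega> \<le> t} \<in> events"
      by measurable
    from prob_neg[OF this] have "prob {\<omega>\<in>space M. t < Y \<omega>} = 1 - prob {\<omega>\<in>space M. Y \<omega> \<le> t}"
      by (simp add: not_le)
    also have "prob {\<omega>\<in>space M. Y \<omega> \<le> t} = copula_cdf M U (vec t)"
      unfolding copula_cdf_def Y_le_iff by simp
    finally have "prob {\<omega>\<in>space M. t < Y \<omega>} = 1 - copula_cdf M U (vec t)" .
    moreover have "prob {\<omega>\<in>space M. t < Y \<omega>} = 0" if "1 \<le> t"
      using Y_unit that by (subst prob_Collect_eq_0) (auto elim: eventually_mono)
    ultimately show ?thesis
      by (cases "t < 1") (auto simp: indicator_def)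
  qed
  have "F_norm M U x 1 = (\<integral>\<omega>. max x (Y \<omega>) \<partial>M)"
    unfolding F_norm_def Y_def using assms(2) by simp
  also have "\<dots> = x + enn2real (\<integral>\<^sup>+t\<in>{x..}. ennreal (prob {\<omega>\<in>space M. t < Y \<omega>}) \<partial>lborel)"
    by (rule expectation_max_const_eq_tail) fact
  finally show ?thesis
    by (simp only: tail_eq)
qed

lemma diagonal_expansion_at_left_one:
  fixes C :: "real^'d::finite \<Rightarrow> real"
  assumes "(\<lambda>u. C u - (1 - D_norm N Z (1 - u))) \<in> o[at 1 within cbox 0 1](\<lambda>u. D_norm N Z (1 - u))"
  shows "(\<lambda>t. (1 - C (vec t)) - D_norm N Z 1 * (1 - t)) \<in> o[at_left 1](\<lambda>t. 1 - t)"
proof -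
  have "(\<lambda>t. - ((1 - C (vec t)) - D_norm N Z 1 * (1 - t))) \<in> o[at_left 1](\<lambda>t. D_norm N Z 1 * (1 - t))"
  proof (rule landau_o.small.cong_ex[THEN iffD1])
    show "(\<lambda>t. C (vec t) - (1 - D_norm N Z (1 - vec t))) \<in> o[at_left 1](\<lambda>t. D_norm N Z (1 - vec t))"
      by (rule landau_o.small.compose[OF assms filterlim_vec_at_left_one])
    have "(1::real^'d) - vec t = (1 - t) *\<^sub>R 1" for t
      by (simp add: vec_eq_iff)
    then have "D_norm N Z (1 - vec t) = D_norm N Z 1 * (1 - t)" if "t < 1" for t
      using that by (simp add: D_norm_scaleR)
    then show "\<forall>\<^sub>F t in at_left 1. D_norm N Z (1 - vec t) = D_norm N Z 1 * (1 - t)"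
      "\<forall>\<^sub>F t in at_left 1. C (vec t) - (1 - D_norm N Z (1 - vec t))
         = - ((1 - C (vec t)) - D_norm N Z 1 * (1 - t))"
      using eventually_at_left_real[of 0 "1::real"] by (auto elim!: eventually_mono)
  qed
  also have "(\<lambda>t. D_norm N Z 1 * (1 - t)) \<in> O[at_left 1](\<lambda>t. 1 - t)"
    by (intro landau_o.bigI[of "\<bar>D_norm N Z 1\<bar> + 1"])
      (auto simp: abs_mult intro!: always_eventually mult_right_mono)
  finally show ?thesis
    by (simp only: landau_o.small.uminus_in_iff)
qed

lemma nn_integral_cmult_one_minus_Ico:
  fixes c x :: real
  assumes "0 \<le> c" "x \<le> 1"
  shows "(\<integral>\<^sup>+t\<in>{x..<1}. ennreal (c * (1 - t)) \<partial>lborel) = ennreal (c * (1 - x)^2 / 2)"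
proof -
  have "((\<lambda>t. c * (1 - t)) has_integral (- c * (1 - 1)^2 / 2) - (- c * (1 - x)^2 / 2)) {x..1}"
    by (rule fundamental_theorem_of_calculus[OF assms(2)])
      (auto intro!: derivative_eq_intros simp flip: has_real_derivative_iff_has_vector_derivative
        simp: field_simps)
  then have integral: "((\<lambda>t. c * (1 - t)) has_integral c * (1 - x)^2 / 2) {x..1}"
    by simp
  have "AE t in lborel. ennreal (c * (1 - t)) * indicator {x..<1} t = ennreal (indicator {x..1} t * (c * (1 - t)))"
    using AE_lborel_singleton[of 1] by eventually_elim (auto simp: indicator_def)
  then have "(\<integral>\<^sup>+t\<in>{x..<1}. ennreal (c * (1 - t)) \<partial>lborel) = (\<integral>\<^sup>+t. ennreal (indicator {x..1} t * (c * (1 - t))) \<partial>lborel)"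
    by (rule nn_integral_cong_AE)
  also have "\<dots> = ennreal (c * (1 - x)^2 / 2)"
    by (rule nn_integral_has_integral_lebesgue[rotated]) (use assms integral in auto)
  finally show ?thesis .
qed

lemma nn_integral_near_linear_bounds:
  fixes G :: "real \<Rightarrow> real"
  assumes "x < 1"
    and G_nonneg: "\<And>t. x \<le> t \<Longrightarrow> t < 1 \<Longrightarrow> 0 \<le> G t"
    and G_close: "\<And>t. x \<le> t \<Longrightarrow> t < 1 \<Longrightarrow> \<bar>G t - D * (1 - t)\<bar> \<le> e * (1 - t)"
  shows "\<bar>enn2real (\<integral>\<^sup>+t\<in>{x..<1}. ennreal (G t) \<partial>lborel) - D * (1 - x)^2 / 2\<bar> \<le> e * (1 - x)^2 / 2"
proof -
  define J where "J = (\<integral>\<^sup>+t\<in>{x..<1}. ennreal (G t) \<partial>lborel)"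
  have G_bounds: "max 0 (D - e) * (1 - t) \<le> G t" "G t \<le> (D + e) * (1 - t)"
    if "x \<le> t" "t < 1" for t
    using G_close[OF that] G_nonneg[OF that] by (auto simp: abs_le_iff algebra_simps max_def)
  have "0 \<le> (D + e) * (1 - x)"
    using G_bounds(2)[of x] G_nonneg[of x] \<open>x < 1\<close> by simp
  then have "0 \<le> D + e"
    using \<open>x < 1\<close> by (simp add: zero_le_mult_iff)
  have "J \<le> (\<integral>\<^sup>+t\<in>{x..<1}. ennreal ((D + e) * (1 - t)) \<partial>lborel)"
    unfolding J_def by (intro nn_integral_mono) (auto simp: indicator_def intro: ennreal_leI G_bounds)
  also have "\<dots> = ennreal ((D + e) * (1 - x)^2 / 2)"
    by (rule nn_integral_cmult_one_minus_Ico) (use \<open>0 \<le> D + e\<close> \<open>x < 1\<close> in auto)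
  finally have J_upper: "J \<le> ennreal ((D + e) * (1 - x)^2 / 2)" .
  have "ennreal (max 0 (D - e) * (1 - x)^2 / 2)
      = (\<integral>\<^sup>+t\<in>{x..<1}. ennreal (max 0 (D - e) * (1 - t)) \<partial>lborel)"
    by (rule nn_integral_cmult_one_minus_Ico[symmetric]) (use \<open>x < 1\<close> in auto)
  also have "\<dots> \<le> J"
    unfolding J_def by (intro nn_integral_mono) (auto simp: indicator_def intro: ennreal_leI G_bounds)
  finally have J_lower: "ennreal (max 0 (D - e) * (1 - x)^2 / 2) \<le> J" .
  obtain j where j: "J = ennreal j" "0 \<le> j"
    using J_upper by (cases J) (auto simp: top_unique)
  have "(D - e) * (1 - x)^2 / 2 \<le> max 0 (D - e) * (1 - x)^2 / 2"
    by (intro divide_right_mono mult_right_mono) auto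
  also have "\<dots> \<le> j"
    using J_lower j by simp
  finally have "(D - e) * (1 - x)^2 / 2 \<le> j" .
  moreover have "j \<le> (D + e) * (1 - x)^2 / 2"
    using J_upper j \<open>0 \<le> D + e\<close> by simp
  ultimately show ?thesis
    unfolding J_def[symmetric] j(1) abs_le_iff using j(2)
    by (simp add: left_diff_distrib distrib_right diff_divide_distrib add_divide_distrib)
qed

lemma nn_integral_quadratic_expansion_at_left_one:
  fixes G :: "real \<Rightarrow> real"
  assumes G_nonneg: "\<And>t. t < 1 \<Longrightarrow> 0 \<le> G t"
    and G_linear: "(\<lambda>t. G t - D * (1 - t)) \<in> o[at_left 1](\<lambda>t. 1 - t)"
  shows "(\<lambda>x. enn2real (\<integral>\<^sup>+t\<in>{x..<1}. ennreal (G t) \<partial>lborel) - D * (1 - x)^2 / 2)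
           \<in> o[at_left 1](\<lambda>x. (1 - x)^2)"
proof (rule landau_o.smallI)
  fix c :: real
  assume "0 < c"
  have "\<forall>\<^sub>F t in at_left 1. \<bar>G t - D * (1 - t)\<bar> \<le> c * (1 - t)"
    using landau_o.smallD[OF G_linear \<open>0 < c\<close>] eventually_at_left_real[of 0 "1::real", simplified]
    by eventually_elim auto
  then obtain b where "b < 1" and G_close: "\<And>t. b < t \<Longrightarrow> t < 1 \<Longrightarrow> \<bar>G t - D * (1 - t)\<bar> \<le> c * (1 - t)"
    unfolding eventually_at_left_field by blast
  show "\<forall>\<^sub>F x in at_left 1.
      norm (enn2real (\<integral>\<^sup>+t\<in>{x..<1}. ennreal (G t) \<partial>lborel) - D * (1 - x)^2 / 2) \<le> c * norm ((1 - x)^2)"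
    unfolding eventually_at_left_field
  proof (intro exI conjI allI impI)
    fix x :: real
    assume "b < x" "x < 1"
    have "\<bar>enn2real (\<integral>\<^sup>+t\<in>{x..<1}. ennreal (G t) \<partial>lborel) - D * (1 - x)^2 / 2\<bar> \<le> c * (1 - x)^2 / 2"
      by (rule nn_integral_near_linear_bounds) (use \<open>b < x\<close> \<open>x < 1\<close> G_nonneg G_close in auto)
    also have "\<dots> \<le> c * (1 - x)^2"
      using \<open>0 < c\<close> by simp
    finally show "norm (enn2real (\<integral>\<^sup>+t\<in>{x..<1}. ennreal (G t) \<partial>lborel) - D * (1 - x)^2 / 2) \<le> c * norm ((1 - x)^2)"
      by simp
  qed (rule \<open>b < 1\<close>)
qed

theorem proposition2p21:
  fixes M :: "'a measure" and U :: "'a \<Rightarrow> real^'d::finite"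
    and N :: "'b measure" and Z :: "'b \<Rightarrow> real^'d"
  assumes "copula_rv M U"
    and "D_norm_generator N Z"
    and "(\<lambda>u. copula_cdf M U u - (1 - D_norm N Z (1 - u)))
           \<in> o[at 1 within cbox 0 1](\<lambda>u. D_norm N Z (1 - u))"
  shows "(\<lambda>x. (1 - F_norm M U x 1) - ((1 - x) - (1 - x)^2 / 2 * D_norm N Z 1))
           \<in> o[at_left 1](\<lambda>x. (1 - x)^2)"
proof -
  define D where "D = D_norm N Z 1"
  define G where "G t = 1 - copula_cdf M U (vec t)" for t
  have G_nonneg: "0 \<le> G t" for t
    using assms(1) unfolding G_def copula_cdf_def copula_rv_def by (auto intro: prob_space.prob_le_1)
  have "(\<lambda>t. G t - D * (1 - t)) \<in> o[at_left 1](\<lambda>t. 1 - t)"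
    unfolding G_def D_def by (rule diagonal_expansion_at_left_one[OF assms(3)])
  then have expansion: "(\<lambda>x. enn2real (\<integral>\<^sup>+t\<in>{x..<1}. ennreal (G t) \<partial>lborel) - D * (1 - x)^2 / 2)
      \<in> o[at_left 1](\<lambda>x. (1 - x)^2)"
    by (rule nn_integral_quadratic_expansion_at_left_one[rotated]) (rule G_nonneg)
  have "\<forall>\<^sub>F x in at_left 1. (1 - F_norm M U x 1) - ((1 - x) - (1 - x)^2 / 2 * D)
      = - (enn2real (\<integral>\<^sup>+t\<in>{x..<1}. ennreal (G t) \<partial>lborel) - D * (1 - x)^2 / 2)"
    using eventually_at_left_real[of 0 "1::real"]
    by (auto elim!: eventually_mono simp: F_norm_diagonal_eq_tail[OF assms(1)] G_def)
  from landau_o.small.in_cong[OF this] expansion show ?thesis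
    unfolding D_def by (simp only: landau_o.small.uminus_in_iff)
qed

end
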